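(* Let $f\in C^{1,1}_L(\mathbb{R}^2)$, let $\mathcal{Y}=\{y_1,y_2,y_3\}\subset\mathbb{R}^2$ be affinely independent with $\langle y_2-y_1,y_3-y_1\rangle<0$, and let $m$ be the affine function interpolating $f$ on $\mathcal{Y}$. Let $y_0\in\mathbb{R}^2$ have barycentric coordinates satisfying $\ell_2>0$, $\ell_3<0$, and $\ell_1\langle y_2-y_1,y_3-y_1\rangle-\ell_3\langle y_2-y_3,y_1-y_3\rangle<0$. Let $G=\sum_{i=0}^{3}\ell_iy_iy_i^T$ and $H^\star=P\begin{bmatrix}L&0\\0&-L\end{bmatrix}P^{-1}$ with $P=[\,y_2-y_0\ \ y_1-y_3\,]$. Then $$|m(y_0)-f(y_0)|\le\tfrac12\langle G,H^\star\rangle .$$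
   Context: Let $L>0$. $C^{1,1}_L(\mathbb{R}^2)$ denotes the set of differentiable $f:\mathbb{R}^2\to\mathbb{R}$ with $\|\nabla f(u_1)-\nabla f(u_2)\|\le L\|u_1-u_2\|$ for all $u_1,u_2$ (Euclidean norm). $m$ is the unique affine function with $m(y_i)=f(y_i)$, $i=1,2,3$. The barycentric coordinates of $y_0$ w.r.t. $\mathcal{Y}$ are the unique reals $\ell_1,\ell_2,\ell_3$ with $\ell_1+\ell_2+\ell_3=1$ and $\ell_1y_1+\ell_2y_2+\ell_3y_3=y_0$; one sets $\ell_0=-1$. The matrix $P$ is invertible under these hypotheses. For matrices, $\langle A,B\rangle=\sum_{i,j}A_{ij}B_{ij}$ (here $H^\star$ need not be symmetric). *)

theory Defs
  imports "HOL-Analysis.Analysis"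
begin

definition C11 :: "real \<Rightarrow> (real^2 \<Rightarrow> real) \<Rightarrow> bool" where
  "C11 L f \<longleftrightarrow> (\<exists>g :: real^2 \<Rightarrow> real^2.
      (\<forall>u. (f has_derivative (\<lambda>h. g u \<bullet> h)) (at u)) \<and>
      (\<forall>u1 u2. norm (g u1 - g u2) \<le> L * norm (u1 - u2)))"

definition outer :: "real^2 \<Rightarrow> real^2 \<Rightarrow> real^2^2" where
  "outer x y = (\<chi> i j. x $ i * y $ j)"

definition frob :: "real^2^2 \<Rightarrow> real^2^2 \<Rightarrow> real" where
  "frob A B = (\<Sum>i\<in>UNIV. \<Sum>j\<in>UNIV. A $ i $ j * B $ i $ j)"

definition cols2 :: "real^2 \<Rightarrow> real^2 \<Rightarrow> real^2^2" where
  "cols2 a b = (\<chi> i j. if j = 1 then a $ i else b $ i)"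

definition diag2 :: "real \<Rightarrow> real \<Rightarrow> real^2^2" where
  "diag2 a b = (\<chi> i j. if i = j then (if i = 1 then a else b) else 0)"

end

theory Submission
  imports Defs
begin

text \<open>
  Put \<open>k = l1 + l3\<close> and let \<open>p\<close> be the point where the line \<open>y2 y0\<close> meets the line \<open>y1 y3\<close>.
  The sign hypotheses force \<open>l1 > 0\<close> and \<open>k > 0\<close>, so \<open>y0\<close> is a convex combination of \<open>y2, p\<close>
  and \<open>y1\<close> one of \<open>p, y3\<close>. The interpolation error \<open>m y0 - f y0\<close> is a signed combination of the
  two corresponding convex-combination errors, each of which the descent lemma bounds by
  \<open>L/2 a b |x - y|\<^sup>2\<close>; the result is \<open>L/2 (l2/k |y2 - y0|\<^sup>2 - l1 l3/k |y1 - y3|\<^sup>2)\<close>.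
  On the matrix side, \<open>\<langle>G, H\<^sup>\<star>\<rangle> = \<Sum> li (yi - y0)\<^sup>T H\<^sup>\<star> (yi - y0)\<close>, and \<open>H\<^sup>\<star>\<close> has the
  eigenvectors \<open>y2 - y0\<close>, \<open>y1 - y3\<close> with eigenvalues \<open>L\<close>, \<open>-L\<close>; expanding \<open>yi - y0\<close> in this
  eigenbasis shows that \<open>\<langle>G, H\<^sup>\<star>\<rangle>\<close> equals twice that bound.
\<close>

lemma lipschitz_gradient_taylor_bound:
  fixes f :: "'a::real_inner \<Rightarrow> real" and g :: "'a \<Rightarrow> 'a"
  assumes grad: "\<And>u. (f has_derivative (\<lambda>h. g u \<bullet> h)) (at u)"
    and lip: "\<And>u1 u2. norm (g u1 - g u2) \<le> L * norm (u1 - u2)"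
  shows "\<bar>f y - f z - g z \<bullet> (y - z)\<bar> \<le> L / 2 * (norm (y - z))\<^sup>2"
proof -
  define w where "w = y - z"
  define c where "c = L * (norm w)\<^sup>2"
  define h where "h t = f (z + t *\<^sub>R w) - t * (g z \<bullet> w)" for t
  have h_deriv: "(h has_real_derivative (g (z + t *\<^sub>R w) - g z) \<bullet> w) (at t)" for t
  proof -
    have "((\<lambda>t. f (z + t *\<^sub>R w)) has_derivative (\<lambda>s. g (z + t *\<^sub>R w) \<bullet> (s *\<^sub>R w))) (at t)"
      by (rule has_derivative_compose[OF _ grad]) (auto intro!: derivative_eq_intros)
    then have "((\<lambda>t. f (z + t *\<^sub>R w)) has_real_derivative g (z + t *\<^sub>R w) \<bullet> w) (at t)"
      by (simp add: has_field_derivative_def mult_commute_abs)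
    then show ?thesis
      unfolding h_def by (auto intro!: derivative_eq_intros simp: inner_diff_left)
  qed
  have h_deriv_bound: "\<bar>(g (z + t *\<^sub>R w) - g z) \<bullet> w\<bar> \<le> c * t" if "t \<ge> 0" for t
  proof -
    have "\<bar>(g (z + t *\<^sub>R w) - g z) \<bullet> w\<bar> \<le> norm (g (z + t *\<^sub>R w) - g z) * norm w"
      by (rule Cauchy_Schwarz_ineq2)
    also have "\<dots> \<le> L * norm (t *\<^sub>R w) * norm w"
      using lip[of "z + t *\<^sub>R w" z] by (simp add: mult_right_mono)
    also have "\<dots> = c * t"
      using that by (simp add: c_def power2_eq_square)
    finally show ?thesis .
  qed
  have "h 1 - c / 2 * 1\<^sup>2 \<le> h 0 - c / 2 * 0\<^sup>2"
  proof (rule DERIV_nonpos_imp_nonincreasing[where f = "\<lambda>t. h t - c / 2 * t\<^sup>2"])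
    fix t :: real assume "0 \<le> t" "t \<le> 1"
    then show "\<exists>y. ((\<lambda>t. h t - c / 2 * t\<^sup>2) has_real_derivative y) (at t) \<and> y \<le> 0"
      using h_deriv[of t] h_deriv_bound[of t]
      by (intro exI[of _ "(g (z + t *\<^sub>R w) - g z) \<bullet> w - c * t"])
        (auto intro!: derivative_eq_intros simp: abs_le_iff)
  qed simp
  moreover have "h 0 + c / 2 * 0\<^sup>2 \<le> h 1 + c / 2 * 1\<^sup>2"
  proof (rule DERIV_nonneg_imp_nondecreasing[where f = "\<lambda>t. h t + c / 2 * t\<^sup>2"])
    fix t :: real assume "0 \<le> t" "t \<le> 1"
    then show "\<exists>y. ((\<lambda>t. h t + c / 2 * t\<^sup>2) has_real_derivative y) (at t) \<and> y \<ge> 0"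
      using h_deriv[of t] h_deriv_bound[of t]
      by (intro exI[of _ "(g (z + t *\<^sub>R w) - g z) \<bullet> w + c * t"])
        (auto intro!: derivative_eq_intros simp: abs_le_iff)
  qed simp
  moreover have "h 1 - h 0 = f y - f z - g z \<bullet> (y - z)"
    by (simp add: h_def w_def)
  ultimately show ?thesis
    unfolding c_def w_def by (intro abs_leI) (simp_all add: field_simps)
qed

lemma lipschitz_gradient_convex_combination_error:
  fixes f :: "'a::real_inner \<Rightarrow> real" and g :: "'a \<Rightarrow> 'a"
  assumes grad: "\<And>u. (f has_derivative (\<lambda>h. g u \<bullet> h)) (at u)"
    and lip: "\<And>u1 u2. norm (g u1 - g u2) \<le> L * norm (u1 - u2)"
    and "a \<ge> 0" "b \<ge> 0" "a + b = 1"
  shows "\<bar>a * f x + b * f y - f (a *\<^sub>R x + b *\<^sub>R y)\<bar> \<le> L / 2 * a * b * (norm (x - y))\<^sup>2"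
proof -
  define z where "z = a *\<^sub>R x + b *\<^sub>R y"
  define E where "E t = f t - f z - g z \<bullet> (t - z)" for t
  have xz: "x - z = b *\<^sub>R (x - y)" and yz: "y - z = (- a) *\<^sub>R (x - y)"
    using \<open>a + b = 1\<close> by (simp_all add: z_def algebra_simps flip: scaleR_add_left)
  have Ex: "\<bar>E x\<bar> \<le> L / 2 * b\<^sup>2 * (norm (x - y))\<^sup>2"
    using lipschitz_gradient_taylor_bound[OF grad lip, of x z] \<open>b \<ge> 0\<close>
    by (simp add: E_def xz power_mult_distrib)
  have Ey: "\<bar>E y\<bar> \<le> L / 2 * a\<^sup>2 * (norm (x - y))\<^sup>2"
    using lipschitz_gradient_taylor_bound[OF grad lip, of y z] \<open>a \<ge> 0\<close>
    by (simp add: E_def yz power_mult_distrib)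
  \<comment> \<open>The first-order terms cancel because \<open>a (x - z) + b (y - z) = 0\<close>.\<close>
  have "a * f x + b * f y - f z = a * E x + b * E y"
    using \<open>a + b = 1\<close> by (simp add: E_def xz yz algebra_simps flip: distrib_right)
  also have "\<bar>\<dots>\<bar> \<le> a * \<bar>E x\<bar> + b * \<bar>E y\<bar>"
    using assms(3,4) by (simp add: abs_triangle_ineq[THEN order_trans] abs_mult)
  also have "\<dots> \<le> a * (L / 2 * b\<^sup>2 * (norm (x - y))\<^sup>2) + b * (L / 2 * a\<^sup>2 * (norm (x - y))\<^sup>2)"
    using assms(3,4) Ex Ey by (intro add_mono mult_left_mono)
  also have "\<dots> = L / 2 * a * b * (a + b) * (norm (x - y))\<^sup>2"
    by (simp add: power2_eq_square algebra_simps)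
  finally show ?thesis
    using \<open>a + b = 1\<close> by (simp add: z_def)
qed

lemma cevian_point_decomposition:
  fixes y0 y1 y2 y3 :: "'a::real_vector"
  assumes "l1 + l2 + l3 = 1" "y0 = l1 *\<^sub>R y1 + l2 *\<^sub>R y2 + l3 *\<^sub>R y3"
    and "l1 \<noteq> 0" "l1 + l3 \<noteq> 0" "p = (1 / (l1 + l3)) *\<^sub>R (l1 *\<^sub>R y1 + l3 *\<^sub>R y3)"
  shows "y0 = l2 *\<^sub>R y2 + (l1 + l3) *\<^sub>R p"
    and "y1 = ((l1 + l3) / l1) *\<^sub>R p + (- l3 / l1) *\<^sub>R y3"
    and "(l1 + l3) *\<^sub>R (y2 - p) = y2 - y0"
    and "(l1 + l3) *\<^sub>R (p - y3) = l1 *\<^sub>R (y1 - y3)"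
proof -
  have kp: "(l1 + l3) *\<^sub>R p = l1 *\<^sub>R y1 + l3 *\<^sub>R y3"
    using assms(4,5) by simp
  show "y0 = l2 *\<^sub>R y2 + (l1 + l3) *\<^sub>R p"
    unfolding kp assms(2) by (simp add: algebra_simps)
  show "y1 = ((l1 + l3) / l1) *\<^sub>R p + (- l3 / l1) *\<^sub>R y3"
    using assms(3-5) by (simp add: scaleR_add_right)
  have "y2 - y0 = (l1 + l2 + l3) *\<^sub>R y2 - y0"
    using assms(1) by simp
  then show "(l1 + l3) *\<^sub>R (y2 - p) = y2 - y0"
    unfolding scaleR_diff_right kp assms(2) by (simp add: algebra_simps)
  show "(l1 + l3) *\<^sub>R (p - y3) = l1 *\<^sub>R (y1 - y3)"
    unfolding scaleR_diff_right kp by (simp add: algebra_simps)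
qed

lemma lipschitz_gradient_extrapolation_error:
  fixes f :: "'a::real_inner \<Rightarrow> real" and g :: "'a \<Rightarrow> 'a"
  assumes grad: "\<And>u. (f has_derivative (\<lambda>h. g u \<bullet> h)) (at u)"
    and lip: "\<And>u1 u2. norm (g u1 - g u2) \<le> L * norm (u1 - u2)"
    and "l1 > 0" "l2 > 0" "l3 < 0" "l1 + l3 > 0" "l1 + l2 + l3 = 1"
    and y0: "y0 = l1 *\<^sub>R y1 + l2 *\<^sub>R y2 + l3 *\<^sub>R y3"
  shows "\<bar>l1 * f y1 + l2 * f y2 + l3 * f y3 - f y0\<bar>
    \<le> L / 2 * (l2 / (l1 + l3) * (norm (y2 - y0))\<^sup>2 - l1 * l3 / (l1 + l3) * (norm (y1 - y3))\<^sup>2)"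
proof -
  define k where "k = l1 + l3"
  define p where "p = (1 / k) *\<^sub>R (l1 *\<^sub>R y1 + l3 *\<^sub>R y3)"
  have "k > 0" "l2 = 1 - k"
    using assms(6,7) by (simp_all add: k_def)
  have y0_split: "y0 = l2 *\<^sub>R y2 + k *\<^sub>R p" and y1_split: "y1 = (k / l1) *\<^sub>R p + (- l3 / l1) *\<^sub>R y3"
    and y2_p: "k *\<^sub>R (y2 - p) = y2 - y0" and p_y3: "k *\<^sub>R (p - y3) = l1 *\<^sub>R (y1 - y3)"
    using cevian_point_decomposition[OF assms(7) y0 _ _ p_def[unfolded k_def]] assms(3,6)
    by (simp_all add: k_def)
  have norm_y2_y0: "norm (y2 - y0) = k * norm (y2 - p)"
    using y2_p \<open>k > 0\<close> by (metis norm_scaleR abs_of_pos)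
  have "k * norm (p - y3) = l1 * norm (y1 - y3)"
    using p_y3 \<open>k > 0\<close> \<open>l1 > 0\<close> by (metis norm_scaleR abs_of_pos)
  then have norm_y1_y3: "norm (y1 - y3) = k / l1 * norm (p - y3)"
    using \<open>l1 > 0\<close> by (simp add: field_simps)
  define T1 where "T1 = l2 * f y2 + k * f p - f y0"
  define T2 where "T2 = (k / l1) * f p + (- l3 / l1) * f y3 - f y1"
  have T1_bound: "\<bar>T1\<bar> \<le> L / 2 * l2 * k * (norm (y2 - p))\<^sup>2"
    using lipschitz_gradient_convex_combination_error[OF grad lip, of l2 k y2 p] assms(4) \<open>k > 0\<close>
    by (simp add: T1_def y0_split \<open>l2 = 1 - k\<close>)
  have "k / l1 + - l3 / l1 = 1" "0 \<le> - l3 / l1"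
    using \<open>l1 > 0\<close> \<open>l3 < 0\<close> by (simp_all add: k_def field_simps)
  then have T2_bound: "\<bar>T2\<bar> \<le> L / 2 * (k / l1) * (- l3 / l1) * (norm (p - y3))\<^sup>2"
    using lipschitz_gradient_convex_combination_error[OF grad lip, of "k / l1" "- l3 / l1" p y3]
      \<open>l1 > 0\<close> \<open>k > 0\<close>
    by (simp add: T2_def y1_split)
  have "l1 * f y1 + l2 * f y2 + l3 * f y3 - f y0 = T1 - l1 * T2"
    using \<open>l1 > 0\<close> by (simp add: T1_def T2_def k_def field_simps)
  also have "\<bar>\<dots>\<bar> \<le> \<bar>T1\<bar> + l1 * \<bar>T2\<bar>"
    using abs_triangle_ineq4[of T1 "l1 * T2"] \<open>l1 > 0\<close> by (simp add: abs_mult)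
  also have "\<dots> \<le> L / 2 * l2 * k * (norm (y2 - p))\<^sup>2 + l1 * (L / 2 * (k / l1) * (- l3 / l1) * (norm (p - y3))\<^sup>2)"
    using T1_bound T2_bound \<open>l1 > 0\<close> by (intro add_mono mult_left_mono) auto
  also have "\<dots> = L / 2 * (l2 / k * (norm (y2 - y0))\<^sup>2 - l1 * l3 / k * (norm (y1 - y3))\<^sup>2)"
    using \<open>k > 0\<close> \<open>l1 > 0\<close> by (simp add: norm_y2_y0 norm_y1_y3 field_simps power2_eq_square)
  finally show ?thesis
    by (simp add: k_def)
qed

lemma frob_outer: "frob (outer x y) H = x \<bullet> (H *v y)"
  unfolding frob_def outer_def inner_vec_def matrix_vector_mult_def
  by (simp add: sum_distrib_left mult_ac)

lemma frob_add_left: "frob (A + B) H = frob A H + frob B H"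
  unfolding frob_def by (simp add: sum.distrib distrib_right)

lemma frob_scaleR_left: "frob (c *\<^sub>R A) H = c * frob A H"
  unfolding frob_def by (simp add: sum_distrib_left mult_ac)

lemma frob_barycentric_outer:
  assumes "l1 + l2 + l3 = 1" and y0: "y0 = l1 *\<^sub>R y1 + l2 *\<^sub>R y2 + l3 *\<^sub>R y3"
  shows "frob ((-1) *\<^sub>R outer y0 y0 + l1 *\<^sub>R outer y1 y1 + l2 *\<^sub>R outer y2 y2 + l3 *\<^sub>R outer y3 y3) H
    = l1 * ((y1 - y0) \<bullet> (H *v (y1 - y0))) + l2 * ((y2 - y0) \<bullet> (H *v (y2 - y0)))
      + l3 * ((y3 - y0) \<bullet> (H *v (y3 - y0)))"
proof -
  have left: "l1 * (y1 \<bullet> w) + l2 * (y2 \<bullet> w) + l3 * (y3 \<bullet> w) = y0 \<bullet> w" for w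
    by (simp add: y0 inner_add_left)
  have right: "l1 * (w \<bullet> (H *v y1)) + l2 * (w \<bullet> (H *v y2)) + l3 * (w \<bullet> (H *v y3)) = w \<bullet> (H *v y0)" for w
    by (simp add: y0 matrix_vector_right_distrib matrix_vector_mult_scaleR inner_add_right)
  have "(l1 + l2 + l3) * (y0 \<bullet> (H *v y0)) = y0 \<bullet> (H *v y0)"
    using assms(1) by simp
  then show ?thesis
    using left[of "H *v y0"] right[of y0]
    unfolding frob_add_left frob_scaleR_left frob_outer
    by (simp add: matrix_vector_mult_diff_distrib inner_diff_left inner_diff_right algebra_simps)
qed

lemma eigenpair_quadratic_form:
  fixes H :: "real^'n^'n"
  assumes "H *v u = a *\<^sub>R u" "H *v v = b *\<^sub>R v"
  shows "(s *\<^sub>R u + t *\<^sub>R v) \<bullet> (H *v (s *\<^sub>R u + t *\<^sub>R v))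
    = a * s\<^sup>2 * (u \<bullet> u) + b * t\<^sup>2 * (v \<bullet> v) + (a + b) * s * t * (u \<bullet> v)"
  using assms
  by (simp add: matrix_vector_right_distrib matrix_vector_mult_scaleR inner_add_left inner_add_right
      inner_commute[of v u] algebra_simps power2_eq_square)

lemma frob_barycentric_outer_eigenpair:
  fixes H :: "real^2^2"
  assumes "l1 + l2 + l3 = 1" and y0: "y0 = l1 *\<^sub>R y1 + l2 *\<^sub>R y2 + l3 *\<^sub>R y3" and "l1 + l3 \<noteq> 0"
    and "H *v (y2 - y0) = c *\<^sub>R (y2 - y0)" "H *v (y1 - y3) = (- c) *\<^sub>R (y1 - y3)"
  shows "frob ((-1) *\<^sub>R outer y0 y0 + l1 *\<^sub>R outer y1 y1 + l2 *\<^sub>R outer y2 y2 + l3 *\<^sub>R outer y3 y3) H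
    = c * (l2 / (l1 + l3) * (norm (y2 - y0))\<^sup>2 - l1 * l3 / (l1 + l3) * (norm (y1 - y3))\<^sup>2)"
proof -
  define k where "k = l1 + l3"
  define u where "u = y2 - y0"
  define v where "v = y1 - y3"
  have "k \<noteq> 0" "l1 = k - l3" "l2 = 1 - k"
    using assms(1,3) by (simp_all add: k_def)
  have "(l1 *\<^sub>R y1 + l2 *\<^sub>R y2 + l3 *\<^sub>R y3) - (l1 + l2 + l3) *\<^sub>R y0 = 0"
    using assms(1) y0 by simp
  then have "k *\<^sub>R (y1 - y0) = (- l2) *\<^sub>R u + l3 *\<^sub>R v" "k *\<^sub>R (y3 - y0) = (- l2) *\<^sub>R u + (- l1) *\<^sub>R v"
    by (simp_all add: u_def v_def k_def algebra_simps)
  then have "k *\<^sub>R (y1 - y0) = k *\<^sub>R ((- l2 / k) *\<^sub>R u + (l3 / k) *\<^sub>R v)"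
    "k *\<^sub>R (y3 - y0) = k *\<^sub>R ((- l2 / k) *\<^sub>R u + (- l1 / k) *\<^sub>R v)"
    using \<open>k \<noteq> 0\<close> by (simp_all add: scaleR_add_right scaleR_diff_right)
  then have y1_y0: "y1 - y0 = (- l2 / k) *\<^sub>R u + (l3 / k) *\<^sub>R v"
    and y3_y0: "y3 - y0 = (- l2 / k) *\<^sub>R u + (- l1 / k) *\<^sub>R v"
    using \<open>k \<noteq> 0\<close> by simp_all
  have y2_y0: "y2 - y0 = 1 *\<^sub>R u + 0 *\<^sub>R v"
    by (simp add: u_def)
  have "H *v u = c *\<^sub>R u" "H *v v = (- c) *\<^sub>R v"
    using assms(4,5) by (simp_all add: u_def v_def)
  note quadratic = eigenpair_quadratic_form[OF this]
  show ?thesis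
    unfolding frob_barycentric_outer[OF assms(1) y0] y1_y0 y2_y0 y3_y0 quadratic
    using \<open>k \<noteq> 0\<close> \<open>l1 = k - l3\<close> \<open>l2 = 1 - k\<close>
    by (simp add: power2_norm_eq_inner flip: u_def v_def k_def) (simp add: field_simps power2_eq_square)
qed

lemma matrix_inv_left:
  fixes A :: "'a::semiring_1^'n^'m"
  assumes "invertible A"
  shows "matrix_inv A ** A = mat 1"
  using assms unfolding invertible_def matrix_inv_def by (rule someI2_ex) simp

lemma cols2_mult_vector: "cols2 u v *v x = x $ 1 *\<^sub>R u + x $ 2 *\<^sub>R v"
  unfolding cols2_def matrix_vector_mult_def by (simp add: vec_eq_iff sum_2 mult_ac)

lemma diag2_mult_axis:
  "diag2 a b *v axis 1 1 = a *\<^sub>R axis 1 1" "diag2 a b *v axis 2 1 = b *\<^sub>R axis 2 1"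
  unfolding diag2_def matrix_vector_mult_def axis_def by (simp_all add: vec_eq_iff sum_2 forall_2)

lemma cols2_diag2_conjugate_eigenvectors:
  assumes "invertible (cols2 u v)"
  shows "(cols2 u v ** diag2 a b ** matrix_inv (cols2 u v)) *v u = a *\<^sub>R u"
    and "(cols2 u v ** diag2 a b ** matrix_inv (cols2 u v)) *v v = b *\<^sub>R v"
proof -
  let ?P = "cols2 u v"
  have conj: "(?P ** D ** matrix_inv ?P) *v (?P *v x) = ?P *v (D *v x)" for D x
    using matrix_inv_left[OF assms] by (metis matrix_vector_mul_assoc matrix_vector_mul_lid)
  have "?P *v axis 1 1 = u" "?P *v axis 2 1 = v"
    by (simp_all add: cols2_mult_vector axis_def)
  then show "(?P ** diag2 a b ** matrix_inv ?P) *v u = a *\<^sub>R u"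
    and "(?P ** diag2 a b ** matrix_inv ?P) *v v = b *\<^sub>R v"
    using conj[of "diag2 a b" "axis 1 1"] conj[of "diag2 a b" "axis 2 1"]
    by (simp_all add: diag2_mult_axis matrix_vector_mult_scaleR)
qed

lemma affine_independent3_combination_eq_0:
  fixes y1 y2 y3 :: "'a::real_vector"
  assumes "y1 \<noteq> y2" "y1 \<noteq> y3" "y2 \<noteq> y3" "\<not> affine_dependent {y1, y2, y3}"
    and "c1 + c2 + c3 = 0" "c1 *\<^sub>R y1 + c2 *\<^sub>R y2 + c3 *\<^sub>R y3 = 0"
  shows "c1 = 0 \<and> c2 = 0 \<and> c3 = 0"
proof (rule ccontr)
  assume nonzero: "\<not> (c1 = 0 \<and> c2 = 0 \<and> c3 = 0)"
  define U where "U y = (if y = y1 then c1 else if y = y2 then c2 else c3)" for y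
  have "sum U {y1, y2, y3} = c1 + c2 + c3" "(\<Sum>y\<in>{y1, y2, y3}. U y *\<^sub>R y) = c1 *\<^sub>R y1 + c2 *\<^sub>R y2 + c3 *\<^sub>R y3"
    using assms(1-3) by (simp_all add: U_def)
  moreover have "\<exists>y\<in>{y1, y2, y3}. U y \<noteq> 0"
    using assms(1-3) nonzero by (auto simp: U_def)
  ultimately have "affine_dependent {y1, y2, y3}"
    using assms(5,6) by (subst affine_dependent_explicit_finite) auto
  with assms(4) show False ..
qed

lemma invertible_cols2_barycentric:
  fixes y0 y1 y2 y3 :: "real^2"
  assumes "y1 \<noteq> y2" "y1 \<noteq> y3" "y2 \<noteq> y3" "\<not> affine_dependent {y1, y2, y3}"
    and "l1 + l2 + l3 = 1" "y0 = l1 *\<^sub>R y1 + l2 *\<^sub>R y2 + l3 *\<^sub>R y3" "l1 + l3 \<noteq> 0"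
  shows "invertible (cols2 (y2 - y0) (y1 - y3))"
  unfolding invertible_left_inverse matrix_left_invertible_ker
proof (intro allI impI)
  fix x :: "real^2"
  assume "cols2 (y2 - y0) (y1 - y3) *v x = 0"
  moreover have "cols2 (y2 - y0) (y1 - y3) *v x
      = (x$2 - x$1 * l1) *\<^sub>R y1 + (x$1 * (l1 + l3)) *\<^sub>R y2 + (- x$1 * l3 - x$2) *\<^sub>R y3"
  proof -
    have y0: "y0 = l1 *\<^sub>R y1 + (1 - l1 - l3) *\<^sub>R y2 + l3 *\<^sub>R y3"
      using assms(5,6) by (simp add: eq_diff_eq)
    show ?thesis
      by (simp add: y0 cols2_mult_vector vec_eq_iff algebra_simps)
  qed
  ultimately have "(x$2 - x$1 * l1) *\<^sub>R y1 + (x$1 * (l1 + l3)) *\<^sub>R y2 + (- x$1 * l3 - x$2) *\<^sub>R y3 = 0"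
    by simp
  moreover have "(x$2 - x$1 * l1) + x$1 * (l1 + l3) + (- x$1 * l3 - x$2) = 0"
    by (simp add: algebra_simps)
  ultimately have "x$1 * (l1 + l3) = 0 \<and> x$2 - x$1 * l1 = 0"
    using affine_independent3_combination_eq_0[OF assms(1-4)] by blast
  then show "x = 0"
    using \<open>l1 + l3 \<noteq> 0\<close> by (simp add: vec_eq_iff forall_2)
qed

lemma barycentric_sign_conditions:
  fixes y1 y2 y3 :: "'a::real_inner"
  assumes "(y2 - y1) \<bullet> (y3 - y1) < 0" "l3 < 0"
    and "l1 * ((y2 - y1) \<bullet> (y3 - y1)) - l3 * ((y2 - y3) \<bullet> (y1 - y3)) < 0"
  shows "0 < l1" "0 < l1 + l3"
proof -
  define A where "A = (y2 - y1) \<bullet> (y3 - y1)"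
  define V where "V = (y1 - y3) \<bullet> (y1 - y3)"
  have B: "(y2 - y3) \<bullet> (y1 - y3) = V - A"
    unfolding A_def V_def by (simp add: inner_diff_left inner_diff_right inner_commute algebra_simps)
  have "A < 0" "0 \<le> V"
    using assms(1) by (simp_all add: A_def V_def)
  have cond: "l1 * A - l3 * (V - A) < 0"
    using assms(3) by (simp add: A_def B)
  have "l3 * (V - A) < 0"
    using \<open>A < 0\<close> \<open>0 \<le> V\<close> \<open>l3 < 0\<close> by (simp add: mult_neg_pos)
  then have "l1 * A < 0"
    using cond by simp
  then show "0 < l1"
    using \<open>A < 0\<close> by (simp add: mult_less_0_iff)
  have "(l1 + l3) * A < l3 * V"
    using cond by (simp add: algebra_simps)
  also have "l3 * V \<le> 0"
    using \<open>l3 < 0\<close> \<open>0 \<le> V\<close> by (simp add: mult_nonpos_nonneg)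
  finally show "0 < l1 + l3"
    using \<open>A < 0\<close> by (simp add: mult_less_0_iff)
qed

theorem theorem5p3:
  fixes L :: real and f m :: "real^2 \<Rightarrow> real"
    and y0 y1 y2 y3 :: "real^2" and l1 l2 l3 :: real
  assumes "L > 0"
    and "C11 L f"
    and "y1 \<noteq> y2" "y1 \<noteq> y3" "y2 \<noteq> y3"
    and "\<not> affine_dependent {y1, y2, y3}"
    and "(y2 - y1) \<bullet> (y3 - y1) < 0"
    and "\<exists>a b. \<forall>x. m x = a \<bullet> x + b"
    and "m y1 = f y1" "m y2 = f y2" "m y3 = f y3"
    and "l1 + l2 + l3 = 1"
    and "l1 *\<^sub>R y1 + l2 *\<^sub>R y2 + l3 *\<^sub>R y3 = y0"
    and "l2 > 0" "l3 < 0"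
    and "l1 * ((y2 - y1) \<bullet> (y3 - y1)) - l3 * ((y2 - y3) \<bullet> (y1 - y3)) < 0"
  shows "let G = (-1) *\<^sub>R outer y0 y0 + l1 *\<^sub>R outer y1 y1
                 + l2 *\<^sub>R outer y2 y2 + l3 *\<^sub>R outer y3 y3;
             P = cols2 (y2 - y0) (y1 - y3);
             Hs = P ** diag2 L (-L) ** matrix_inv P
         in \<bar>m y0 - f y0\<bar> \<le> 1/2 * frob G Hs"
proof -
  obtain g where grad: "\<And>u. (f has_derivative (\<lambda>h. g u \<bullet> h)) (at u)"
    and lip: "\<And>u1 u2. norm (g u1 - g u2) \<le> L * norm (u1 - u2)"
    using \<open>C11 L f\<close> unfolding C11_def by blast
  have y0: "y0 = l1 *\<^sub>R y1 + l2 *\<^sub>R y2 + l3 *\<^sub>R y3"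
    using assms(13) by simp
  have "0 < l1" "0 < l1 + l3"
    using barycentric_sign_conditions[OF assms(7,15,16)] by simp_all
  obtain a b where m: "\<And>x. m x = a \<bullet> x + b"
    using assms(8) by blast
  have "m y0 = l1 * m y1 + l2 * m y2 + l3 * m y3"
    using assms(12) by (simp add: m y0 inner_add_right algebra_simps) (simp flip: distrib_left)
  then have "\<bar>m y0 - f y0\<bar> \<le> L / 2 * (l2 / (l1 + l3) * (norm (y2 - y0))\<^sup>2 - l1 * l3 / (l1 + l3) * (norm (y1 - y3))\<^sup>2)"
    using lipschitz_gradient_extrapolation_error[OF grad lip \<open>0 < l1\<close> assms(14,15) \<open>0 < l1 + l3\<close> assms(12) y0]
    by (simp add: assms(9-11))
  moreover have "invertible (cols2 (y2 - y0) (y1 - y3))"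
    using invertible_cols2_barycentric[OF assms(3-6,12) y0] \<open>0 < l1 + l3\<close> by simp
  ultimately show ?thesis
    using frob_barycentric_outer_eigenpair[OF assms(12) y0 _ cols2_diag2_conjugate_eigenvectors]
      \<open>0 < l1 + l3\<close> by (simp add: Let_def)
qed

end
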